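(* Let $\Sigma$ be a finite group, let $f\colon A\to B$ be a difference homomorphism of difference rings, $X=\operatorname{PSpec}A$, $Y=\operatorname{PSpec}B$, and $f^*_\Sigma\colon Y\to X$, $\mathfrak q\mapsto f^{-1}(\mathfrak q)$. Then: (1) if for some $s\in A$ and $u\in B$ the map $\operatorname{Spec}B_{f(s)u}\to\operatorname{Spec}A_s$ induced by $f$ is surjective, then $f^*_\Sigma$ maps $Y_{f(s)u}$ onto $X_s$; (2) if for some $s\in A$ the map $\operatorname{Spec}B_{f(s)}\to\operatorname{Spec}A_s$ induced by $f$ has the going-up property, then $f^*_\Sigma\colon Y_{f(s)}\to X_s$ has the going-up property; (3) if for some $s\in A$ and $u\in B$ the map $\operatorname{Spec}B_{f(s)u}\to\operatorname{Spec}A_s$ induced by $f$ has the going-down property, then $f^*_\Sigma\colon Y_{f(s)u}\to X_s$ has the going-down property.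
   Context: A difference ring is a commutative ring with identity with an action of the group $\Sigma$ by ring automorphisms; a difference homomorphism is a unital ring homomorphism commuting with the actions; a difference ideal is a $\Sigma$-stable ideal. A difference ideal $\mathfrak q$ is pseudoprime if there is a multiplicatively closed $S\ni1$ such that $\mathfrak q$ is maximal among difference ideals not meeting $S$; $\operatorname{PSpec}A$ is the set of pseudoprime ideals, and for $s\in A$, $X_s$ denotes the set of pseudoprime ideals of $A$ not containing $s$ (similarly $Y_t$ for $t\in B$). Contractions of pseudoprime ideals under difference homomorphisms are pseudoprime. A map $g\colon\operatorname{Spec}B'\to\operatorname{Spec}A'$ (contraction along $A'\to B'$) has the going-up property if for every chain of primes $\mathfrak p_1\subseteq\dots\subseteq\mathfrak p_n$ of $A'$ and every chain $\mathfrak q_1\subseteq\dots\subseteq\mathfrak q_m$ ($0<m<n$) of primes of $B'$ with $\mathfrak q_i^c=\mathfrak p_i$, the latter chain extends to $\mathfrak q_1\subseteq\dots\subseteq\mathfrak q_n$ with $\mathfrak q_i^c=\mathfrak p_i$ for all $i$; going-down is defined in the same way with all inclusions reversed. For subsets $Y'\subseteq Y$, $X'\subseteq X$ with $f^*_\Sigma(Y')\subseteq X'$, the map $f^*_\Sigma\colon Y'\to X'$ has the going-up (resp. going-down) property if the same condition holds with all chains consisting of pseudoprime ideals, the chains of $A$ lying in $X'$ and the chains of $B$ (including the extended ones) lying in $Y'$. *)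

theory Defs
  imports "HOL-Algebra.Algebra"
begin

definition diff_ring :: "('g,'c) monoid_scheme \<Rightarrow> ('a,'m) ring_scheme \<Rightarrow> ('g \<Rightarrow> 'a \<Rightarrow> 'a) \<Rightarrow> bool" where
  "diff_ring G A act \<longleftrightarrow> group G \<and> cring A \<and>
     (\<forall>g\<in>carrier G. act g \<in> ring_iso A A) \<and>
     (\<forall>x\<in>carrier A. act \<one>\<^bsub>G\<^esub> x = x) \<and>
     (\<forall>g\<in>carrier G. \<forall>h\<in>carrier G. \<forall>x\<in>carrier A.
        act (g \<otimes>\<^bsub>G\<^esub> h) x = act g (act h x))"

definition diff_hom :: "('g,'c) monoid_scheme \<Rightarrow> ('a,'m) ring_scheme \<Rightarrow> ('g \<Rightarrow> 'a \<Rightarrow> 'a)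
    \<Rightarrow> ('b,'n) ring_scheme \<Rightarrow> ('g \<Rightarrow> 'b \<Rightarrow> 'b) \<Rightarrow> ('a \<Rightarrow> 'b) \<Rightarrow> bool" where
  "diff_hom G A actA B actB f \<longleftrightarrow> f \<in> ring_hom A B \<and>
     (\<forall>g\<in>carrier G. \<forall>x\<in>carrier A. f (actA g x) = actB g (f x))"

definition diff_ideal :: "('g,'c) monoid_scheme \<Rightarrow> ('a,'m) ring_scheme \<Rightarrow> ('g \<Rightarrow> 'a \<Rightarrow> 'a) \<Rightarrow> 'a set \<Rightarrow> bool" where
  "diff_ideal G A act I \<longleftrightarrow> ideal I A \<and> (\<forall>g\<in>carrier G. act g ` I \<subseteq> I)"

definition mult_closed :: "('a,'m) ring_scheme \<Rightarrow> 'a set \<Rightarrow> bool" where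
  "mult_closed A S \<longleftrightarrow> S \<subseteq> carrier A \<and> \<one>\<^bsub>A\<^esub> \<in> S \<and>
     (\<forall>x\<in>S. \<forall>y\<in>S. x \<otimes>\<^bsub>A\<^esub> y \<in> S)"

definition pseudoprime :: "('g,'c) monoid_scheme \<Rightarrow> ('a,'m) ring_scheme \<Rightarrow> ('g \<Rightarrow> 'a \<Rightarrow> 'a) \<Rightarrow> 'a set \<Rightarrow> bool" where
  "pseudoprime G A act q \<longleftrightarrow>
     (\<exists>S. mult_closed A S \<and> diff_ideal G A act q \<and> q \<inter> S = {} \<and>
        (\<forall>J. diff_ideal G A act J \<and> J \<inter> S = {} \<and> q \<subseteq> J \<longrightarrow> J = q))"

definition PSpec :: "('g,'c) monoid_scheme \<Rightarrow> ('a,'m) ring_scheme \<Rightarrow> ('g \<Rightarrow> 'a \<Rightarrow> 'a) \<Rightarrow> 'a set set" where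
  "PSpec G A act = {q. pseudoprime G A act q}"

definition PSpec_basic :: "('g,'c) monoid_scheme \<Rightarrow> ('a,'m) ring_scheme \<Rightarrow> ('g \<Rightarrow> 'a \<Rightarrow> 'a) \<Rightarrow> 'a \<Rightarrow> 'a set set" where
  "PSpec_basic G A act s = {q \<in> PSpec G A act. s \<notin> q}"

text \<open>Spec of the localization A_s, identified (via contraction) with the primes of A
  not containing s; under this identification the map Spec B_{f(s)u} -> Spec A_s
  induced by f is contraction along f.\<close>
definition Spec_loc :: "('a,'m) ring_scheme \<Rightarrow> 'a \<Rightarrow> 'a set set" where
  "Spec_loc A s = {p. primeideal p A \<and> s \<notin> p}"

definition contr :: "('a,'m) ring_scheme \<Rightarrow> ('a \<Rightarrow> 'b) \<Rightarrow> 'b set \<Rightarrow> 'a set" where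
  "contr A f Q = f -` Q \<inter> carrier A"

text \<open>Going-up (R = (\<subseteq>)) / going-down (R = (\<supseteq>)) property of a map g from Y' to X'.
  Chains are indexed 0..<n (instead of 1..n).\<close>
definition going_prop :: "('x \<Rightarrow> 'x \<Rightarrow> bool) \<Rightarrow> ('y \<Rightarrow> 'y \<Rightarrow> bool) \<Rightarrow> ('y \<Rightarrow> 'x) \<Rightarrow> 'y set \<Rightarrow> 'x set \<Rightarrow> bool" where
  "going_prop RX RY g Y' X' \<longleftrightarrow>
     (\<forall>n m P Q. 0 < m \<and> m < n \<and>
        (\<forall>i<n. P i \<in> X') \<and> (\<forall>i. Suc i < n \<longrightarrow> RX (P i) (P (Suc i))) \<and>
        (\<forall>i<m. Q i \<in> Y') \<and> (\<forall>i. Suc i < m \<longrightarrow> RY (Q i) (Q (Suc i))) \<and>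
        (\<forall>i<m. g (Q i) = P i)
      \<longrightarrow> (\<exists>Q'. (\<forall>i<m. Q' i = Q i) \<and> (\<forall>i<n. Q' i \<in> Y') \<and>
              (\<forall>i. Suc i < n \<longrightarrow> RY (Q' i) (Q' (Suc i))) \<and>
              (\<forall>i<n. g (Q' i) = P i)))"

definition going_up :: "('y set \<Rightarrow> 'x set) \<Rightarrow> 'y set set \<Rightarrow> 'x set set \<Rightarrow> bool" where
  "going_up g Y' X' = going_prop (\<subseteq>) (\<subseteq>) g Y' X'"

definition going_down :: "('y set \<Rightarrow> 'x set) \<Rightarrow> 'y set set \<Rightarrow> 'x set set \<Rightarrow> bool" where
  "going_down g Y' X' = going_prop (\<supseteq>) (\<supseteq>) g Y' X'"

end

theory Submission
  imports Defs
begin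

text \<open>Write \<open>p\<^sub>\<Sigma>\<close> for the intersection of the ideals \<open>\<sigma>\<^sup>-\<^sup>1(p)\<close>, \<open>\<sigma> \<in> \<Sigma>\<close>: it is the
  largest difference ideal inside \<open>p\<close>. The pseudoprime ideals are exactly the \<open>p\<^sub>\<Sigma>\<close> with \<open>p\<close>
  prime (a prime ideal maximal away from \<open>S\<close> contains the given pseudoprime), and since
  \<open>p\<^sub>\<Sigma> = (\<sigma>\<^sup>-\<^sup>1 p)\<^sub>\<Sigma>\<close> the prime may be chosen to avoid any element outside \<open>p\<^sub>\<Sigma>\<close>. Hence \<open>X\<^sub>s\<close> is
  the image of \<open>Spec A\<^sub>s\<close> under \<open>p \<mapsto> p\<^sub>\<Sigma>\<close>, and as contraction commutes with \<open>(-)\<^sub>\<Sigma>\<close> this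
  gives (1). Going-up and going-down only need to be checked one step at a time. For a step
  between pseudoprimes \<open>q\<^sub>\<Sigma>\<close> and \<open>p\<^sub>\<Sigma>\<close>, finiteness of \<open>\<Sigma>\<close> and prime avoidance show that a
  prime containing a finite intersection \<open>I\<^sub>\<Sigma>\<close> contains some \<open>\<sigma>\<^sup>-\<^sup>1(I)\<close>; conjugating one of
  the two primes accordingly puts them in the position where the going-up (going-down) property
  of primes applies, and \<open>(-)\<^sub>\<Sigma>\<close> of the resulting prime is the required pseudoprime.\<close>

lemma (in cring) primeideal_if_maximal_disjoint:
  assumes S: "mult_closed R S" and M: "ideal M R" "M \<inter> S = {}"
    and maximal: "\<And>J. ideal J R \<Longrightarrow> M \<subseteq> J \<Longrightarrow> J \<inter> S = {} \<Longrightarrow> J = M"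
  shows "primeideal M R"
proof -
  interpret M: ideal M R by (fact M(1))
  have S_mult: "x \<otimes> y \<in> S" if "x \<in> S" "y \<in> S" for x y
    using S that by (simp add: mult_closed_def)
  have meets_S: "\<exists>m\<in>M. \<exists>r\<in>carrier R. m \<oplus> r \<otimes> x \<in> S" if x: "x \<in> carrier R" "x \<notin> M" for x
  proof -
    let ?J = "M <+>\<^bsub>R\<^esub> PIdl x"
    have elem: "y \<in> ?J \<longleftrightarrow> (\<exists>m\<in>M. \<exists>r\<in>carrier R. y = m \<oplus> r \<otimes> x)" for y
      unfolding set_add_def' cgenideal_def by blast
    have "M \<subseteq> ?J"
    proof
      fix m assume "m \<in> M"
      moreover have "m = m \<oplus> \<zero> \<otimes> x" using \<open>m \<in> M\<close> x(1) M.Icarr by simp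
      ultimately show "m \<in> ?J" unfolding elem by blast
    qed
    moreover have "x = \<zero> \<oplus> \<one> \<otimes> x" using x(1) by simp
    then have "x \<in> ?J" unfolding elem using M.zero_closed by blast
    ultimately have "?J \<inter> S \<noteq> {}"
      using maximal[OF add_ideals[OF M(1) cgenideal_ideal[OF x(1)]]] x(2) by blast
    then obtain y where "y \<in> ?J" "y \<in> S" by blast
    then show ?thesis unfolding elem by blast
  qed
  show ?thesis
  proof (rule primeidealI[OF M(1) is_cring])
    show "carrier R \<noteq> M"
      using S M(2) by (auto simp: mult_closed_def)
    fix a b assume ab: "a \<in> carrier R" "b \<in> carrier R" "a \<otimes> b \<in> M"
    show "a \<in> M \<or> b \<in> M"
    proof (rule ccontr)
      assume "\<not> (a \<in> M \<or> b \<in> M)"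
      then obtain m1 r1 m2 r2 where
        m: "m1 \<in> M" "r1 \<in> carrier R" "m1 \<oplus> r1 \<otimes> a \<in> S"
           "m2 \<in> M" "r2 \<in> carrier R" "m2 \<oplus> r2 \<otimes> b \<in> S"
        using meets_S ab(1,2) by meson
      have "(m1 \<oplus> r1 \<otimes> a) \<otimes> (m2 \<oplus> r2 \<otimes> b)
              = m1 \<otimes> (m2 \<oplus> r2 \<otimes> b) \<oplus> (r1 \<otimes> a) \<otimes> m2 \<oplus> (r1 \<otimes> r2) \<otimes> (a \<otimes> b)"
        using m ab M.Icarr by algebra
      also have "\<dots> \<in> M"
      proof (intro M.a_closed)
        show "m1 \<otimes> (m2 \<oplus> r2 \<otimes> b) \<in> M" using m ab by (simp add: M.I_r_closed)
        show "(r1 \<otimes> a) \<otimes> m2 \<in> M" using m ab by (simp add: M.I_l_closed)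
        show "(r1 \<otimes> r2) \<otimes> (a \<otimes> b) \<in> M" using m ab by (simp add: M.I_l_closed)
      qed
      finally show False
        using S_mult[OF m(3) m(6)] M(2) by blast
    qed
  qed
qed

lemma (in cring) exists_primeideal_disjoint:
  assumes S: "mult_closed R S" and I: "ideal I R" "I \<inter> S = {}"
  shows "\<exists>P. primeideal P R \<and> I \<subseteq> P \<and> P \<inter> S = {}"
proof -
  define \<I> where "\<I> = {J. ideal J R \<and> I \<subseteq> J \<and> J \<inter> S = {}}"
  have "\<exists>M\<in>\<I>. \<forall>J\<in>\<I>. M \<subseteq> J \<longrightarrow> J = M"
  proof (rule subset_Zorn_nonempty)
    show "\<I> \<noteq> {}" using I unfolding \<I>_def by blast
    fix C assume C: "C \<noteq> {}" "subset.chain \<I> C"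
    have C_sub: "C \<subseteq> \<I>"
      using C(2) by (simp add: pred_on.chain_def)
    then have "subset.chain {J. ideal J R} C"
      using C(2) unfolding pred_on.chain_def \<I>_def by auto
    then have "ideal (\<Union>C) R"
      using chain_Union_is_ideal C(1) by presburger
    moreover have "I \<subseteq> \<Union>C"
      using C(1) C_sub unfolding \<I>_def by auto
    moreover have "\<Union>C \<inter> S = {}"
      using C_sub unfolding \<I>_def by auto
    ultimately show "\<Union>C \<in> \<I>"
      unfolding \<I>_def by simp
  qed
  then obtain M where "ideal M R" "I \<subseteq> M" "M \<inter> S = {}"
    and "\<And>J. ideal J R \<Longrightarrow> M \<subseteq> J \<Longrightarrow> J \<inter> S = {} \<Longrightarrow> J = M"
    unfolding \<I>_def by auto
  then show ?thesis using primeideal_if_maximal_disjoint[OF S] by blast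
qed

lemma going_prop_if_step:
  assumes lift: "\<And>Q P. Q \<in> Y' \<Longrightarrow> P \<in> X' \<Longrightarrow> RX (g Q) P \<Longrightarrow> \<exists>Q'\<in>Y'. RY Q Q' \<and> g Q' = P"
  shows "going_prop RX RY g Y' X'"
  unfolding going_prop_def
proof (intro allI impI, elim conjE)
  fix n m P Q
  assume m: "0 < m" "m < n"
    and P: "\<forall>i<n. P i \<in> X'" "\<forall>i. Suc i < n \<longrightarrow> RX (P i) (P (Suc i))"
    and Q: "\<forall>i<m. Q i \<in> Y'" "\<forall>i. Suc i < m \<longrightarrow> RY (Q i) (Q (Suc i))" "\<forall>i<m. g (Q i) = P i"
  define lifts where "lifts k Q' \<longleftrightarrow> (\<forall>i<m. Q' i = Q i) \<and> (\<forall>i<k. Q' i \<in> Y') \<and>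
      (\<forall>i. Suc i < k \<longrightarrow> RY (Q' i) (Q' (Suc i))) \<and> (\<forall>i<k. g (Q' i) = P i)" for k Q'
  have "\<exists>Q'. lifts n Q'"
    using less_imp_le[OF m(2)]
  proof (induction rule: dec_induct)
    case base
    show ?case using Q unfolding lifts_def by blast
  next
    case (step k)
    then obtain Q' where Q': "lifts k Q'" by blast
    have k: "k = Suc (k - 1)" using m(1) step.hyps(1) by simp
    have "Q' (k - 1) \<in> Y'" "g (Q' (k - 1)) = P (k - 1)"
      using Q' k unfolding lifts_def by (metis lessI)+
    moreover have "RX (P (k - 1)) (P k)"
      using P(2) step.hyps(2) k by metis
    ultimately obtain Qk where Qk: "Qk \<in> Y'" "RY (Q' (k - 1)) Qk" "g Qk = P k"
      using lift P(1) step.hyps(2) by metis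
    have "lifts (Suc k) (Q'(k := Qk))"
      using Q' Qk step.hyps(1) k unfolding lifts_def
      by (auto simp: less_Suc_eq)
    then show ?case by blast
  qed
  then show "\<exists>Q'. (\<forall>i<m. Q' i = Q i) \<and> (\<forall>i<n. Q' i \<in> Y') \<and>
      (\<forall>i. Suc i < n \<longrightarrow> RY (Q' i) (Q' (Suc i))) \<and> (\<forall>i<n. g (Q' i) = P i)"
    unfolding lifts_def .
qed

lemma going_prop_step:
  assumes "going_prop RX RY g Y' X'" "Q \<in> Y'" "g Q \<in> X'" "P \<in> X'" "RX (g Q) P"
  shows "\<exists>Q'\<in>Y'. RY Q Q' \<and> g Q' = P"
proof -
  let ?P = "\<lambda>i::nat. if i = 0 then g Q else P"
  obtain Q' where "\<forall>i<1. Q' i = Q" "\<forall>i<2. Q' i \<in> Y'"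
      "\<forall>i. Suc i < 2 \<longrightarrow> RY (Q' i) (Q' (Suc i))" "\<forall>i<2. g (Q' i) = ?P i"
    using assms(1)[unfolded going_prop_def, rule_format, of 1 2 ?P "\<lambda>_. Q"] assms(2-5)
    by (auto simp: less_2_cases_iff)
  then show ?thesis
    by (metis lessI less_numeral_extra(1) numeral_2_eq_2 zero_neq_numeral)
qed

locale difference_ring =
  fixes G :: "('g,'c) monoid_scheme" and R :: "('a,'m) ring_scheme" (structure)
    and act :: "'g \<Rightarrow> 'a \<Rightarrow> 'a"
  assumes diff_ring: "diff_ring G R act"
begin

sublocale cring R
  using diff_ring by (simp add: diff_ring_def)

lemma group: "group G"
  using diff_ring by (simp add: diff_ring_def)

lemma act_ring_hom: "g \<in> carrier G \<Longrightarrow> act g \<in> ring_hom R R"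
  using diff_ring by (simp add: diff_ring_def ring_iso_def)

lemma act_closed: "g \<in> carrier G \<Longrightarrow> x \<in> carrier R \<Longrightarrow> act g x \<in> carrier R"
  by (rule ring_hom_closed[OF act_ring_hom])

lemma act_mult:
  "g \<in> carrier G \<Longrightarrow> x \<in> carrier R \<Longrightarrow> y \<in> carrier R \<Longrightarrow> act g (x \<otimes> y) = act g x \<otimes> act g y"
  by (rule ring_hom_mult[OF act_ring_hom])

lemma act_one: "x \<in> carrier R \<Longrightarrow> act \<one>\<^bsub>G\<^esub> x = x"
  using diff_ring by (simp add: diff_ring_def)

lemma act_act:
  "g \<in> carrier G \<Longrightarrow> h \<in> carrier G \<Longrightarrow> x \<in> carrier R \<Longrightarrow> act (g \<otimes>\<^bsub>G\<^esub> h) x = act g (act h x)"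
  using diff_ring by (simp add: diff_ring_def)

definition act_vimage :: "'g \<Rightarrow> 'a set \<Rightarrow> 'a set" where
  "act_vimage g p = {a \<in> carrier R. act g a \<in> p}"

definition diff_core :: "'a set \<Rightarrow> 'a set" where
  "diff_core p = {a \<in> carrier R. \<forall>g\<in>carrier G. act g a \<in> p}"

lemma primeideal_act_vimage:
  assumes "g \<in> carrier G" "primeideal p R"
  shows "primeideal (act_vimage g p) R"
  unfolding act_vimage_def
  using ring_hom_ring.primeideal_vimage[OF ring_hom_ringI2[OF ring_axioms ring_axioms
      act_ring_hom[OF assms(1)]] is_cring assms(2)] .

lemma ideal_act_vimage:
  assumes "g \<in> carrier G" "ideal I R"
  shows "ideal (act_vimage g I) R"
  unfolding act_vimage_def
  using ring_hom_ring.ideal_vimage[OF ring_hom_ringI2[OF ring_axioms ring_axioms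
      act_ring_hom[OF assms(1)]] assms(2)] .

lemma diff_core_subset: "diff_core p \<subseteq> p"
proof
  fix a assume "a \<in> diff_core p"
  then show "a \<in> p"
    using act_one group.is_monoid[OF group] monoid.one_closed by (force simp: diff_core_def)
qed

lemma diff_core_mono: "p \<subseteq> p' \<Longrightarrow> diff_core p \<subseteq> diff_core p'"
  unfolding diff_core_def by auto

lemma diff_core_act_vimage:
  assumes t: "t \<in> carrier G"
  shows "diff_core (act_vimage t p) = diff_core p"
proof -
  interpret G: group G by (fact group)
  have "act g a \<in> p" if a: "a \<in> diff_core (act_vimage t p)" and g: "g \<in> carrier G" for a g
  proof -
    have "inv\<^bsub>G\<^esub> t \<otimes>\<^bsub>G\<^esub> g \<in> carrier G" using g t by simp
    then have "act t (act (inv\<^bsub>G\<^esub> t \<otimes>\<^bsub>G\<^esub> g) a) \<in> p"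
      using a by (simp add: diff_core_def act_vimage_def)
    also have "act t (act (inv\<^bsub>G\<^esub> t \<otimes>\<^bsub>G\<^esub> g) a) = act (t \<otimes>\<^bsub>G\<^esub> (inv\<^bsub>G\<^esub> t \<otimes>\<^bsub>G\<^esub> g)) a"
      using a g t by (simp add: act_act diff_core_def)
    also have "t \<otimes>\<^bsub>G\<^esub> (inv\<^bsub>G\<^esub> t \<otimes>\<^bsub>G\<^esub> g) = g"
      using g t by (simp add: G.m_assoc[symmetric])
    finally show ?thesis .
  qed
  moreover have "act t (act g a) \<in> p" if a: "a \<in> diff_core p" and g: "g \<in> carrier G" for a g
  proof -
    have "act (t \<otimes>\<^bsub>G\<^esub> g) a \<in> p"
      using a g t by (simp add: diff_core_def)
    then show ?thesis
      using a g t by (simp add: diff_core_def act_act)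
  qed
  ultimately show ?thesis
    unfolding diff_core_def act_vimage_def using act_closed by blast
qed

lemma diff_ideal_diff_core:
  assumes "ideal I R"
  shows "diff_ideal G R act (diff_core I)"
proof -
  interpret G: group G by (fact group)
  have "diff_core I = (\<Inter>g\<in>carrier G. act_vimage g I)"
    unfolding diff_core_def act_vimage_def by auto
  moreover have "ideal (\<Inter>g\<in>carrier G. act_vimage g I) R"
    using ideal_act_vimage[OF _ assms] G.one_closed by (intro i_Intersect) auto
  ultimately have "ideal (diff_core I) R" by simp
  moreover have "act g a \<in> diff_core I" if "g \<in> carrier G" "a \<in> diff_core I" for g a
    using that by (auto simp: diff_core_def act_closed act_act[symmetric])
  ultimately show ?thesis by (auto simp: diff_ideal_def)
qed

lemma diff_ideal_subset_diff_core:
  assumes "diff_ideal G R act J" "J \<subseteq> p"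
  shows "J \<subseteq> diff_core p"
  using assms ideal.Icarr by (fastforce simp: diff_ideal_def diff_core_def)

lemma pseudoprime_diff_core:
  assumes p: "primeideal p R"
  shows "pseudoprime G R act (diff_core p)"
  unfolding pseudoprime_def
proof (intro exI[of _ "carrier R - p"] conjI allI impI)
  interpret p: primeideal p R by (fact p)
  show "mult_closed R (carrier R - p)"
    unfolding mult_closed_def using p.one_imp_carrier p.I_notcarr p.I_prime by auto
  show "diff_ideal G R act (diff_core p)"
    using diff_ideal_diff_core[OF p.is_ideal] .
  show "diff_core p \<inter> (carrier R - p) = {}"
    using diff_core_subset by auto
  fix J assume J: "diff_ideal G R act J \<and> J \<inter> (carrier R - p) = {} \<and> diff_core p \<subseteq> J"
  then have "J \<subseteq> p"
    using ideal.Icarr by (fastforce simp: diff_ideal_def)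
  then show "J = diff_core p"
    using J diff_ideal_subset_diff_core by blast
qed

lemma pseudoprime_diff_coreE:
  assumes "pseudoprime G R act q"
  obtains p where "primeideal p R" "q = diff_core p"
proof -
  obtain S where S: "mult_closed R S" "diff_ideal G R act q" "q \<inter> S = {}"
    and maximal: "\<forall>J. diff_ideal G R act J \<and> J \<inter> S = {} \<and> q \<subseteq> J \<longrightarrow> J = q"
    using assms unfolding pseudoprime_def by blast
  have "ideal q R"
    using S(2) by (simp add: diff_ideal_def)
  then obtain p where p: "primeideal p R" "q \<subseteq> p" "p \<inter> S = {}"
    using exists_primeideal_disjoint[OF S(1) _ S(3)] by blast
  have "diff_core p \<inter> S = {}"
    using diff_core_subset p(3) by blast
  then have "diff_core p = q"
    using maximal[rule_format, of "diff_core p"] diff_ideal_diff_core[OF primeideal.axioms(1)[OF p(1)]]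
      diff_ideal_subset_diff_core[OF S(2) p(2)] by blast
  then show thesis using that p(1) by blast
qed

lemma PSpec_basic_eq_diff_core_image:
  assumes s: "s \<in> carrier R"
  shows "PSpec_basic G R act s = diff_core ` Spec_loc R s"
proof
  show "PSpec_basic G R act s \<subseteq> diff_core ` Spec_loc R s"
  proof
    fix Q assume "Q \<in> PSpec_basic G R act s"
    then have Q: "pseudoprime G R act Q" "s \<notin> Q"
      by (auto simp: PSpec_basic_def PSpec_def)
    obtain p where p: "primeideal p R" "Q = diff_core p"
      using pseudoprime_diff_coreE[OF Q(1)] .
    then obtain t where t: "t \<in> carrier G" "act t s \<notin> p"
      using Q(2) s by (auto simp: diff_core_def)
    then have "act_vimage t p \<in> Spec_loc R s"
      using primeideal_act_vimage[OF t(1) p(1)] by (simp add: Spec_loc_def act_vimage_def)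
    moreover have "Q = diff_core (act_vimage t p)"
      using diff_core_act_vimage[OF t(1)] p(2) by simp
    ultimately show "Q \<in> diff_core ` Spec_loc R s" by blast
  qed
  show "diff_core ` Spec_loc R s \<subseteq> PSpec_basic G R act s"
  proof
    fix Q assume "Q \<in> diff_core ` Spec_loc R s"
    then obtain p where "primeideal p R" "s \<notin> p" "Q = diff_core p"
      by (auto simp: Spec_loc_def)
    then show "Q \<in> PSpec_basic G R act s"
      using pseudoprime_diff_core diff_core_subset by (auto simp: PSpec_basic_def PSpec_def)
  qed
qed

lemma common_witness_outside_prime:
  assumes p: "primeideal p R" and I: "ideal I R" and T: "finite T" "T \<subseteq> carrier G"
    and witness: "\<forall>t\<in>T. \<exists>a\<in>carrier R - p. act t a \<in> I"
  shows "\<exists>x\<in>carrier R - p. \<forall>t\<in>T. act t x \<in> I"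
  using T witness
proof (induction T rule: finite_induct)
  case empty
  interpret p: primeideal p R by (fact p)
  show ?case using p.I_notcarr p.one_imp_carrier by auto
next
  case (insert t T)
  interpret p: primeideal p R by (fact p)
  interpret I: ideal I R by (fact I)
  obtain x where x: "x \<in> carrier R - p" "\<forall>t\<in>T. act t x \<in> I" using insert by auto
  obtain a where a: "a \<in> carrier R - p" "act t a \<in> I" using insert by auto
  have "x \<otimes> a \<in> carrier R - p"
    using p.I_prime x(1) a(1) by auto
  moreover have "act t' (x \<otimes> a) \<in> I" if t': "t' \<in> insert t T" for t'
  proof -
    have "t' \<in> carrier G" using t' insert by auto
    then have "act t' (x \<otimes> a) = act t' x \<otimes> act t' a"
      using x(1) a(1) by (simp add: act_mult)
    then show ?thesis
      using t' x a \<open>t' \<in> carrier G\<close> by (auto simp: I.I_l_closed I.I_r_closed act_closed)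
  qed
  ultimately show ?case by blast
qed

text \<open>Prime avoidance; this is the only place where finiteness of \<open>\<Sigma>\<close> is used.\<close>

lemma act_vimage_subset_prime:
  assumes "finite (carrier G)" "primeideal p R" "ideal I R" "diff_core I \<subseteq> p"
  shows "\<exists>g\<in>carrier G. act_vimage g I \<subseteq> p"
proof (rule ccontr)
  assume "\<not> ?thesis"
  then have "\<forall>g\<in>carrier G. \<exists>a\<in>carrier R - p. act g a \<in> I"
    by (auto simp: act_vimage_def)
  then obtain x where "x \<in> carrier R - p" "\<forall>g\<in>carrier G. act g x \<in> I"
    using common_witness_outside_prime assms(1-3) by blast
  then show False
    using assms(4) by (auto simp: diff_core_def)
qed

end

lemma contr_eq_Collect: "contr A f Q = {a \<in> carrier A. f a \<in> Q}"
  unfolding contr_def by auto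

locale difference_hom =
  A: difference_ring G A actA + B: difference_ring G B actB
  for G :: "('g,'c) monoid_scheme"
    and A :: "('a,'m) ring_scheme" and actA :: "'g \<Rightarrow> 'a \<Rightarrow> 'a"
    and B :: "('b,'n) ring_scheme" and actB :: "'g \<Rightarrow> 'b \<Rightarrow> 'b" +
  fixes f :: "'a \<Rightarrow> 'b"
  assumes diff_hom: "diff_hom G A actA B actB f"
begin

lemma f_ring_hom: "f \<in> ring_hom A B"
  using diff_hom by (simp add: diff_hom_def)

lemma f_act: "g \<in> carrier G \<Longrightarrow> x \<in> carrier A \<Longrightarrow> f (actA g x) = actB g (f x)"
  using diff_hom by (simp add: diff_hom_def)

lemma primeideal_contr: "primeideal Q B \<Longrightarrow> primeideal (contr A f Q) A"
  unfolding contr_eq_Collect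
  by (rule ring_hom_ring.primeideal_vimage[OF ring_hom_ringI2[OF A.ring_axioms B.ring_axioms f_ring_hom]
        A.is_cring])

lemma contr_diff_core: "contr A f (B.diff_core Q) = A.diff_core (contr A f Q)"
  unfolding contr_eq_Collect A.diff_core_def B.diff_core_def
  using ring_hom_closed[OF f_ring_hom] f_act A.act_closed by auto

lemma contr_act_vimage:
  "t \<in> carrier G \<Longrightarrow> contr A f (B.act_vimage t Q) = A.act_vimage t (contr A f Q)"
  unfolding contr_eq_Collect A.act_vimage_def B.act_vimage_def
  using ring_hom_closed[OF f_ring_hom] f_act A.act_closed by auto

lemma contr_in_Spec_loc_iff:
  assumes "primeideal q B" "s \<in> carrier A"
  shows "contr A f q \<in> Spec_loc A s \<longleftrightarrow> q \<in> Spec_loc B (f s)"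
  using assms primeideal_contr by (auto simp: Spec_loc_def contr_eq_Collect)

lemma contr_image_PSpec_basic:
  assumes s: "s \<in> carrier A" and w: "w \<in> carrier B"
    and surj: "contr A f ` Spec_loc B w = Spec_loc A s"
  shows "contr A f ` PSpec_basic G B actB w = PSpec_basic G A actA s"
proof -
  have "contr A f ` PSpec_basic G B actB w = contr A f ` B.diff_core ` Spec_loc B w"
    using B.PSpec_basic_eq_diff_core_image[OF w] by simp
  also have "\<dots> = A.diff_core ` contr A f ` Spec_loc B w"
    by (simp add: image_image contr_diff_core)
  also have "\<dots> = PSpec_basic G A actA s"
    using surj A.PSpec_basic_eq_diff_core_image[OF s] by simp
  finally show ?thesis .
qed

lemma going_up_PSpec_basic:
  assumes fin: "finite (carrier G)" and s: "s \<in> carrier A"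
    and going_up: "going_up (contr A f) (Spec_loc B (f s)) (Spec_loc A s)"
  shows "going_up (contr A f) (PSpec_basic G B actB (f s)) (PSpec_basic G A actA s)"
  unfolding going_up_def
proof (rule going_prop_if_step)
  fix Q P assume Q: "Q \<in> PSpec_basic G B actB (f s)" and P: "P \<in> PSpec_basic G A actA s"
    and QP: "contr A f Q \<subseteq> P"
  have fs: "f s \<in> carrier B" using ring_hom_closed[OF f_ring_hom s] .
  obtain q where q: "q \<in> Spec_loc B (f s)" "Q = B.diff_core q"
    using Q B.PSpec_basic_eq_diff_core_image[OF fs] by auto
  obtain p where p: "p \<in> Spec_loc A s" "P = A.diff_core p"
    using P A.PSpec_basic_eq_diff_core_image[OF s] by auto
  have q_prime: "primeideal q B" and p_prime: "primeideal p A"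
    using q(1) p(1) by (auto simp: Spec_loc_def)
  have "A.diff_core (contr A f q) \<subseteq> p"
    using QP q(2) p(2) contr_diff_core[of q] A.diff_core_subset[of p] by auto
  then obtain \<sigma> where \<sigma>: "\<sigma> \<in> carrier G" "A.act_vimage \<sigma> (contr A f q) \<subseteq> p"
    using A.act_vimage_subset_prime[OF fin p_prime primeideal.axioms(1)[OF primeideal_contr[OF q_prime]]]
    by blast
  define q' where "q' = B.act_vimage \<sigma> q"
  have q'_prime: "primeideal q' B"
    unfolding q'_def using B.primeideal_act_vimage[OF \<sigma>(1) q_prime] .
  have q'_p: "contr A f q' \<subseteq> p"
    unfolding q'_def using contr_act_vimage[OF \<sigma>(1)] \<sigma>(2) by simp
  then have "contr A f q' \<in> Spec_loc A s"
    using p(1) primeideal_contr[OF q'_prime] by (auto simp: Spec_loc_def)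
  then have "q' \<in> Spec_loc B (f s)"
    using contr_in_Spec_loc_iff[OF q'_prime s] by simp
  then obtain q'' where q'': "q'' \<in> Spec_loc B (f s)" "q' \<subseteq> q''" "contr A f q'' = p"
    using going_prop_step[OF going_up[unfolded going_up_def]] \<open>contr A f q' \<in> Spec_loc A s\<close> p(1) q'_p
    by blast
  have "B.diff_core q'' \<in> PSpec_basic G B actB (f s)"
    using q''(1) B.PSpec_basic_eq_diff_core_image[OF fs] by simp
  moreover have "Q \<subseteq> B.diff_core q''"
    using q(2) B.diff_core_act_vimage[OF \<sigma>(1)] B.diff_core_mono[OF q''(2)] by (simp add: q'_def)
  moreover have "contr A f (B.diff_core q'') = P"
    using contr_diff_core q''(3) p(2) by simp
  ultimately show "\<exists>Q'\<in>PSpec_basic G B actB (f s). Q \<subseteq> Q' \<and> contr A f Q' = P"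
    by blast
qed

lemma going_down_PSpec_basic:
  assumes fin: "finite (carrier G)" and s: "s \<in> carrier A" and u: "u \<in> carrier B"
    and going_down: "going_down (contr A f) (Spec_loc B (f s \<otimes>\<^bsub>B\<^esub> u)) (Spec_loc A s)"
  shows "going_down (contr A f) (PSpec_basic G B actB (f s \<otimes>\<^bsub>B\<^esub> u)) (PSpec_basic G A actA s)"
  unfolding going_down_def
proof (rule going_prop_if_step)
  define w where "w = f s \<otimes>\<^bsub>B\<^esub> u"
  have fs: "f s \<in> carrier B" using ring_hom_closed[OF f_ring_hom s] .
  then have w: "w \<in> carrier B" using u by (simp add: w_def)
  fix Q P assume Q: "Q \<in> PSpec_basic G B actB (f s \<otimes>\<^bsub>B\<^esub> u)" and P: "P \<in> PSpec_basic G A actA s"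
    and PQ: "P \<subseteq> contr A f Q"
  obtain q where q: "q \<in> Spec_loc B w" "Q = B.diff_core q"
    using Q B.PSpec_basic_eq_diff_core_image[OF w] by (auto simp: w_def)
  obtain p where p: "p \<in> Spec_loc A s" "P = A.diff_core p"
    using P A.PSpec_basic_eq_diff_core_image[OF s] by auto
  have q_prime: "primeideal q B" and p_prime: "primeideal p A"
    using q(1) p(1) by (auto simp: Spec_loc_def)
  have "f s \<notin> q"
    using q(1) ideal.I_r_closed[OF primeideal.axioms(1)[OF q_prime] _ u] by (auto simp: Spec_loc_def w_def)
  then have q_s: "contr A f q \<in> Spec_loc A s"
    using contr_in_Spec_loc_iff[OF q_prime s] q_prime by (simp add: Spec_loc_def)
  have "A.diff_core p \<subseteq> contr A f q"
    using PQ p(2) q(2) contr_diff_core[of q] A.diff_core_subset[of "contr A f q"] by auto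
  then obtain \<tau> where \<tau>: "\<tau> \<in> carrier G" "A.act_vimage \<tau> p \<subseteq> contr A f q"
    using A.act_vimage_subset_prime[OF fin primeideal_contr[OF q_prime] primeideal.axioms(1)[OF p_prime]]
    by blast
  define p' where "p' = A.act_vimage \<tau> p"
  have "p' \<in> Spec_loc A s"
    using A.primeideal_act_vimage[OF \<tau>(1) p_prime] \<tau>(2) q_s by (auto simp: Spec_loc_def p'_def)
  then obtain q'' where q'': "q'' \<in> Spec_loc B w" "q'' \<subseteq> q" "contr A f q'' = p'"
    using going_prop_step[OF going_down[unfolded going_down_def, folded w_def] q(1) q_s]
      \<tau>(2) unfolding p'_def by blast
  have "B.diff_core q'' \<in> PSpec_basic G B actB (f s \<otimes>\<^bsub>B\<^esub> u)"
    using q''(1) B.PSpec_basic_eq_diff_core_image[OF w] by (simp add: w_def)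
  moreover have "B.diff_core q'' \<subseteq> Q"
    using q(2) B.diff_core_mono[OF q''(2)] by simp
  moreover have "contr A f (B.diff_core q'') = P"
    using contr_diff_core q''(3) p(2) A.diff_core_act_vimage[OF \<tau>(1)] by (simp add: p'_def)
  ultimately show "\<exists>Q'\<in>PSpec_basic G B actB (f s \<otimes>\<^bsub>B\<^esub> u). Q \<supseteq> Q' \<and> contr A f Q' = P"
    by blast
qed

end

theorem proposition4p5:
  fixes G :: "('g,'c) monoid_scheme"
    and A :: "('a,'m) ring_scheme" and actA :: "'g \<Rightarrow> 'a \<Rightarrow> 'a"
    and B :: "('b,'n) ring_scheme" and actB :: "'g \<Rightarrow> 'b \<Rightarrow> 'b"
    and f :: "'a \<Rightarrow> 'b"
  assumes "group G" and "finite (carrier G)"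
    and "diff_ring G A actA" and "diff_ring G B actB"
    and "diff_hom G A actA B actB f"
  shows
    "(\<forall>s\<in>carrier A. \<forall>u\<in>carrier B.
        contr A f ` Spec_loc B (f s \<otimes>\<^bsub>B\<^esub> u) = Spec_loc A s \<longrightarrow>
        contr A f ` PSpec_basic G B actB (f s \<otimes>\<^bsub>B\<^esub> u) = PSpec_basic G A actA s)
   \<and> (\<forall>s\<in>carrier A.
        going_up (contr A f) (Spec_loc B (f s)) (Spec_loc A s) \<longrightarrow>
        going_up (contr A f) (PSpec_basic G B actB (f s)) (PSpec_basic G A actA s))
   \<and> (\<forall>s\<in>carrier A. \<forall>u\<in>carrier B.
        going_down (contr A f) (Spec_loc B (f s \<otimes>\<^bsub>B\<^esub> u)) (Spec_loc A s) \<longrightarrow>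
        going_down (contr A f) (PSpec_basic G B actB (f s \<otimes>\<^bsub>B\<^esub> u)) (PSpec_basic G A actA s))"
proof -
  interpret difference_hom G A actA B actB f
    using assms(3-5) by (simp add: difference_hom_def difference_hom_axioms_def difference_ring_def)
  show ?thesis
  proof (intro conjI ballI impI)
    fix s u assume s: "s \<in> carrier A" and u: "u \<in> carrier B"
    then have "f s \<otimes>\<^bsub>B\<^esub> u \<in> carrier B"
      using ring_hom_closed[OF f_ring_hom] by simp
    then show "contr A f ` Spec_loc B (f s \<otimes>\<^bsub>B\<^esub> u) = Spec_loc A s \<Longrightarrow>
        contr A f ` PSpec_basic G B actB (f s \<otimes>\<^bsub>B\<^esub> u) = PSpec_basic G A actA s"
      using contr_image_PSpec_basic[OF s] by blast
    show "going_down (contr A f) (Spec_loc B (f s \<otimes>\<^bsub>B\<^esub> u)) (Spec_loc A s) \<Longrightarrow>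
        going_down (contr A f) (PSpec_basic G B actB (f s \<otimes>\<^bsub>B\<^esub> u)) (PSpec_basic G A actA s)"
      using going_down_PSpec_basic[OF assms(2) s u] .
  next
    fix s assume "s \<in> carrier A"
    then show "going_up (contr A f) (Spec_loc B (f s)) (Spec_loc A s) \<Longrightarrow>
        going_up (contr A f) (PSpec_basic G B actB (f s)) (PSpec_basic G A actA s)"
      using going_up_PSpec_basic[OF assms(2)] by blast
  qed
qed

end
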